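(* Let $\varrho:\mathbb{R}\to\mathbb{R}$ be Lipschitz continuous but not affine-linear. Let $S=(N_0,\dots,N_{L-1},1)$ be a network architecture with $L\ge2$, $N_0=d$ and $N_1\ge3$, and let $\Omega\subset\mathbb{R}^d$ be bounded with nonempty interior. Then there is a sequence $(\Phi_n)_{n\in\mathbb{N}}\subset\mathcal{NN}(S)$ such that (1) $\mathrm{R}_\varrho^\Omega(\Phi_n)\to0$ uniformly on $\Omega$, and (2) $\mathrm{Lip}(\mathrm{R}_\varrho^\Omega(\Phi_n))\to\infty$ as $n\to\infty$. Moreover, if $(\Phi_n)_{n\in\mathbb{N}}\subset\mathcal{NN}(S)$ is any sequence with properties (1) and (2), then for every sequence $(\Psi_n)_{n\in\mathbb{N}}\subset\mathcal{NN}(S)$ with $\mathrm{R}_\varrho^\Omega(\Psi_n)=\mathrm{R}_\varrho^\Omega(\Phi_n)$ for all $n$, we have $\|\Psi_n\|_{\mathrm{scaling}}\to\infty$.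
   Context: A neural network with architecture $S=(N_0,\dots,N_L)$ is a family $\Phi=((A_\ell,b_\ell))_{\ell=1}^L$, $A_\ell\in\mathbb{R}^{N_\ell\times N_{\ell-1}}$, $b_\ell\in\mathbb{R}^{N_\ell}$; $\mathcal{NN}(S)$ is the set of these; $\|\Phi\|_{\mathrm{scaling}}=\max_\ell\|A_\ell\|_{\max}$ with $\|\cdot\|_{\max}$ the maximal absolute entry. $\mathrm{R}_\varrho^\Omega(\Phi):\Omega\to\mathbb{R}^{N_L}$, $x\mapsto x_L$, where $x_0=x$, $x_\ell=\varrho(A_\ell x_{\ell-1}+b_\ell)$ for $1\le\ell\le L-1$ (componentwise), $x_L=A_Lx_{L-1}+b_L$. $\mathrm{Lip}(f)$ denotes the smallest Lipschitz constant of $f$. *)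

theory Defs
  imports "HOL-Analysis.Analysis" "HOL-Library.Extended_Real"
begin

type_synonym mat = "nat \<Rightarrow> nat \<Rightarrow> real"
type_synonym vect = "nat \<Rightarrow> real"
type_synonym network = "(mat \<times> vect) list"

definition is_arch :: "nat list \<Rightarrow> bool" where
  "is_arch S \<longleftrightarrow> length S \<ge> 2 \<and> (\<forall>i<length S. S ! i \<ge> 1)"

text \<open>NN(S): layer l (0-based) is (A_{l+1}, b_{l+1}) with A an N_{l+1} x N_l matrix and b in R^{N_{l+1}};
  matrices/vectors are represented canonically as functions vanishing outside the index range.\<close>
definition NN :: "nat list \<Rightarrow> network set" where
  "NN S = {\<Phi>. length \<Phi> = length S - 1 \<and>
     (\<forall>l<length \<Phi>. (\<forall>i j. (S ! Suc l \<le> i \<or> S ! l \<le> j) \<longrightarrow> fst (\<Phi> ! l) i j = 0)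
                  \<and> (\<forall>i. S ! Suc l \<le> i \<longrightarrow> snd (\<Phi> ! l) i = 0))}"

definition max_norm :: "mat \<Rightarrow> nat \<Rightarrow> nat \<Rightarrow> real" where
  "max_norm A m n = Max ({\<bar>A i j\<bar> | i j. i < m \<and> j < n} \<union> {0})"

definition scaling :: "nat list \<Rightarrow> network \<Rightarrow> real" where
  "scaling S \<Phi> = Max ({max_norm (fst (\<Phi> ! l)) (S ! Suc l) (S ! l) | l. l < length \<Phi>} \<union> {0})"

definition aff :: "mat \<times> vect \<Rightarrow> nat \<Rightarrow> vect \<Rightarrow> vect" where
  "aff Ab n x = (\<lambda>i. (\<Sum>j<n. fst Ab i j * x j) + snd Ab i)"

primrec act :: "(real \<Rightarrow> real) \<Rightarrow> nat list \<Rightarrow> network \<Rightarrow> vect \<Rightarrow> nat \<Rightarrow> vect" where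
  "act \<rho> S \<Phi> x 0 = x"
| "act \<rho> S \<Phi> x (Suc l) = (\<lambda>i. \<rho> (aff (\<Phi> ! l) (S ! l) (act \<rho> S \<Phi> x l) i))"

definition coord_enum :: "nat \<Rightarrow> 'd::finite" where
  "coord_enum = (SOME f. bij_betw f {..<CARD('d)} (UNIV :: 'd set))"

definition vec_to_seq :: "real^'d::finite \<Rightarrow> vect" where
  "vec_to_seq x = (\<lambda>j. if j < CARD('d) then x $ coord_enum j else 0)"

definition realize :: "(real \<Rightarrow> real) \<Rightarrow> nat list \<Rightarrow> network \<Rightarrow> real^'d::finite \<Rightarrow> real" where
  "realize \<rho> S \<Phi> x =
     (let L = length \<Phi> in aff (\<Phi> ! (L - 1)) (S ! (L - 1)) (act \<rho> S \<Phi> (vec_to_seq x) (L - 1)) 0)"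

text \<open>smallest Lipschitz constant on U (\<infinity> if not Lipschitz)\<close>
definition lip_const :: "'a::metric_space set \<Rightarrow> ('a \<Rightarrow> 'b::metric_space) \<Rightarrow> ereal" where
  "lip_const U f = Inf {ereal C | C. C-lipschitz_on U f}"

end

theory Submission
  imports Defs "HOL-Real_Asymp.Real_Asymp"
begin

(*
  If the scaling of a network is at most B, every layer is Lipschitz in the sup-norm with a
  constant depending only on B, the widths and Lip(rho); hence Lipschitz constants of the
  realizations tending to infinity force the scaling to infinity.

  For the construction, a Lipschitz rho that is not affine has an increment
  h(t) = rho(t + c) - rho(t) that is bounded but not constant (otherwise rho - rho(0) would be
  additive and Lipschitz, hence linear). Two neurons of the first hidden layer realize h along
  one input coordinate; every further layer applies an affine map that sends the two values
  at points s0, s1 back to fixed p, q with rho(p) ~= rho(q), so the resulting scalar function P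
  stays bounded and nonconstant. The networks x |-> P(n^2 (x_k - x0_k) + s0) / n then tend to 0
  uniformly, while their slope between x0 and a point at distance ~ 1/n^2 in the interior of
  Omega is ~ n.
*)

section \<open>Lipschitz constants and the scaling of a network\<close>

lemma lip_const_le: "K-lipschitz_on U f \<Longrightarrow> lip_const U f \<le> ereal K"
  unfolding lip_const_def by (rule Inf_lower) blast

lemma slope_le_lip_const:
  assumes "x \<in> U" "y \<in> U" "x \<noteq> y"
  shows "ereal (dist (f x) (f y) / dist x y) \<le> lip_const U f"
  unfolding lip_const_def
  using assms by (auto intro!: Inf_greatest simp: divide_le_eq dest: lipschitz_onD)

lemma lip_const_cong: "(\<And>x. x \<in> U \<Longrightarrow> f x = g x) \<Longrightarrow> lip_const U f = lip_const U g"
  unfolding lip_const_def by simp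

lemma abs_entry_le_max_norm: "i < m \<Longrightarrow> j < n \<Longrightarrow> \<bar>A i j\<bar> \<le> max_norm A m n"
  unfolding max_norm_def by (rule Max_ge) (auto intro: finite_image_set2)

lemma scaling_nonneg: "0 \<le> scaling S \<Phi>"
  unfolding scaling_def by (rule Max_ge) auto

lemma max_norm_le_scaling:
  "l < length \<Phi> \<Longrightarrow> max_norm (fst (\<Phi> ! l)) (S ! Suc l) (S ! l) \<le> scaling S \<Phi>"
  unfolding scaling_def by (rule Max_ge) auto

lemma abs_entry_le_scaling:
  assumes "\<Phi> \<in> NN S" "l < length \<Phi>" "j < S ! l"
  shows "\<bar>fst (\<Phi> ! l) i j\<bar> \<le> scaling S \<Phi>"
proof (cases "i < S ! Suc l")
  case True
  then show ?thesis
    using abs_entry_le_max_norm max_norm_le_scaling assms(2,3) by (blast intro: order_trans)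
next
  case False
  then have "fst (\<Phi> ! l) i j = 0" using assms(1,2) unfolding NN_def by auto
  then show ?thesis using scaling_nonneg by simp
qed

lemma aff_diff_le:
  assumes "\<And>j. j < n \<Longrightarrow> \<bar>fst Ab i j\<bar> \<le> B" and "\<And>j. j < n \<Longrightarrow> \<bar>u j - v j\<bar> \<le> D"
  shows "\<bar>aff Ab n u i - aff Ab n v i\<bar> \<le> real n * B * D"
proof -
  have "\<bar>aff Ab n u i - aff Ab n v i\<bar> = \<bar>\<Sum>j<n. fst Ab i j * (u j - v j)\<bar>"
    unfolding aff_def by (simp add: sum_subtractf[symmetric] right_diff_distrib)
  also have "\<dots> \<le> (\<Sum>j<n. \<bar>fst Ab i j * (u j - v j)\<bar>)"
    by (rule sum_abs)
  also have "\<dots> \<le> (\<Sum>j<n. B * D)"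
  proof (rule sum_mono)
    fix j assume "j \<in> {..<n}"
    then have "\<bar>fst Ab i j\<bar> \<le> B" "\<bar>u j - v j\<bar> \<le> D" using assms by auto
    moreover have "0 \<le> B" using calculation(1) abs_ge_zero[of "fst Ab i j"] by linarith
    ultimately show "\<bar>fst Ab i j * (u j - v j)\<bar> \<le> B * D"
      unfolding abs_mult by (intro mult_mono) auto
  qed
  finally show ?thesis by simp
qed

lemma act_diff_le:
  assumes "C-lipschitz_on UNIV \<rho>"
    and "\<And>l i j. l < length \<Psi> \<Longrightarrow> j < S ! l \<Longrightarrow> \<bar>fst (\<Psi> ! l) i j\<bar> \<le> B"
    and "\<And>j. \<bar>u j - v j\<bar> \<le> D"
    and "l \<le> length \<Psi>"
  shows "\<bar>act \<rho> S \<Psi> u l i - act \<rho> S \<Psi> v l i\<bar> \<le> (\<Prod>m<l. C * real (S ! m) * B) * D"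
  using assms(4)
proof (induction l arbitrary: i)
  case 0
  then show ?case using assms(3) by simp
next
  case (Suc l)
  let ?aff = "\<lambda>x. aff (\<Psi> ! l) (S ! l) (act \<rho> S \<Psi> x l) i"
  have "\<bar>act \<rho> S \<Psi> u (Suc l) i - act \<rho> S \<Psi> v (Suc l) i\<bar> \<le> C * \<bar>?aff u - ?aff v\<bar>"
    using lipschitz_onD[OF assms(1)] by (simp add: dist_real_def)
  also have "\<dots> \<le> C * (real (S ! l) * B * ((\<Prod>m<l. C * real (S ! m) * B) * D))"
    using Suc assms(2) lipschitz_on_nonneg[OF assms(1)]
    by (intro mult_left_mono aff_diff_le) auto
  finally show ?case by (simp add: ac_simps)
qed

lemma abs_vec_to_seq_diff_le: "\<bar>vec_to_seq x j - vec_to_seq y j\<bar> \<le> dist x y"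
  unfolding vec_to_seq_def dist_norm using component_le_norm_cart[of "x - y"] by auto

lemma realize_lipschitz:
  fixes \<Psi> :: network
  assumes "C-lipschitz_on UNIV \<rho>" "\<Psi> \<in> NN S" "length S \<ge> 2" "scaling S \<Psi> \<le> B"
  shows "(real (S ! (length S - 2)) * B * (\<Prod>m<length S - 2. C * real (S ! m) * B))-lipschitz_on UNIV
     (realize \<rho> S \<Psi> :: real^'d::finite \<Rightarrow> real)"
proof (rule lipschitz_onI)
  let ?L = "length S - 2" and ?K = "\<Prod>m<length S - 2. C * real (S ! m) * B"
  have len: "length \<Psi> = Suc ?L" using assms(2,3) unfolding NN_def by auto
  have B: "\<And>l i j. l < length \<Psi> \<Longrightarrow> j < S ! l \<Longrightarrow> \<bar>fst (\<Psi> ! l) i j\<bar> \<le> B"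
    using abs_entry_le_scaling[OF assms(2)] assms(4) by (blast intro: order_trans)
  fix x y :: "real^'d"
  have act: "\<bar>act \<rho> S \<Psi> (vec_to_seq x) ?L j - act \<rho> S \<Psi> (vec_to_seq y) ?L j\<bar> \<le> ?K * dist x y" for j
    using len by (intro act_diff_le[OF assms(1) B abs_vec_to_seq_diff_le]) auto
  have "dist (realize \<rho> S \<Psi> x) (realize \<rho> S \<Psi> y)
      = \<bar>aff (\<Psi> ! ?L) (S ! ?L) (act \<rho> S \<Psi> (vec_to_seq x) ?L) 0
         - aff (\<Psi> ! ?L) (S ! ?L) (act \<rho> S \<Psi> (vec_to_seq y) ?L) 0\<bar>"
    unfolding realize_def Let_def dist_real_def len by simp
  also have "\<dots> \<le> real (S ! ?L) * B * (?K * dist x y)"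
  proof (rule aff_diff_le)
    show "\<bar>fst (\<Psi> ! ?L) 0 j\<bar> \<le> B" if "j < S ! ?L" for j
      using B len that by simp
  qed (rule act)
  finally show "dist (realize \<rho> S \<Psi> x) (realize \<rho> S \<Psi> y) \<le> real (S ! ?L) * B * ?K * dist x y"
    by (simp only: mult.assoc)
  have "0 \<le> B" using scaling_nonneg assms(4) by (rule order_trans)
  then show "0 \<le> real (S ! ?L) * B * ?K"
    using lipschitz_on_nonneg[OF assms(1)] by (simp add: prod_nonneg)
qed

lemma scaling_at_top_if_lip_const_PInfty:
  fixes \<Psi> :: "nat \<Rightarrow> network" and U :: "(real^'d::finite) set"
  assumes "C-lipschitz_on UNIV \<rho>" "\<And>n. \<Psi> n \<in> NN S" "length S \<ge> 2"
    and "(\<lambda>n. lip_const U (realize \<rho> S (\<Psi> n))) \<longlonglongrightarrow> \<infinity>"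
  shows "filterlim (\<lambda>n. scaling S (\<Psi> n)) at_top sequentially"
  unfolding filterlim_at_top
proof
  fix B :: real
  define K where "K = real (S ! (length S - 2)) * B * (\<Prod>m<length S - 2. C * real (S ! m) * B)"
  have "\<forall>\<^sub>F n in sequentially. ereal K < lip_const U (realize \<rho> S (\<Psi> n))"
    using assms(4) by (simp add: tendsto_PInfty)
  then show "\<forall>\<^sub>F n in sequentially. B \<le> scaling S (\<Psi> n)"
  proof (rule eventually_mono)
    fix n assume K_less: "ereal K < lip_const U (realize \<rho> S (\<Psi> n))"
    show "B \<le> scaling S (\<Psi> n)"
    proof (rule ccontr)
      assume "\<not> B \<le> scaling S (\<Psi> n)"
      then have "K-lipschitz_on U (realize \<rho> S (\<Psi> n))"
        unfolding K_def using assms(1-3)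
        by (intro lipschitz_on_subset[OF realize_lipschitz]) auto
      from lip_const_le[OF this] K_less show False by simp
    qed
  qed
qed

section \<open>Lipschitz activations that are not affine\<close>

lemma additive_imp_linear_if_bounded:
  fixes g :: "real \<Rightarrow> real"
  assumes add: "\<And>x y. g (x + y) = g x + g y" and bound: "\<And>x. \<bar>g x\<bar> \<le> K * \<bar>x\<bar>"
  shows "g x = g 1 * x"
proof -
  define e where "e t = g t - g 1 * t" for t
  define K' where "K' = K + \<bar>g 1\<bar>"
  have e_add: "e (x + y) = e x + e y" for x y
    unfolding e_def using add by (simp add: algebra_simps)
  have e_0: "e 0 = 0" using e_add[of 0 0] by simp
  have e_bound: "\<bar>e x\<bar> \<le> K' * \<bar>x\<bar>" for x
  proof -
    have "\<bar>e x\<bar> \<le> \<bar>g x\<bar> + \<bar>g 1\<bar> * \<bar>x\<bar>"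
      unfolding e_def abs_mult[symmetric] by (rule abs_triangle_ineq4)
    then show ?thesis unfolding K'_def distrib_right using bound[of x] by linarith
  qed
  have e_nat_mult: "e (real m * t) = real m * e t" for m t
    by (induction m) (simp_all add: e_0 e_add distrib_right)
  have e_int: "e (of_int k) = 0" for k
  proof (cases k rule: int_cases2)
    case (nonneg m)
    then show ?thesis using e_nat_mult[of m 1] by (simp add: e_def)
  next
    case (nonpos m)
    then show ?thesis using e_nat_mult[of m 1] e_add[of "real m" "- real m"] e_0 by (simp add: e_def)
  qed
  have K'_nonneg: "0 \<le> K'"
    using bound[of 1] abs_ge_zero[of "g 1"] unfolding K'_def by linarith
  \<comment> \<open>e vanishes on the integers, so e (m t) = e (frac (m t)) stays bounded as m grows\<close>
  have multiples_bounded: "real m * \<bar>e t\<bar> \<le> K'" for m t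
  proof -
    have "e (real m * t) = e (frac (real m * t)) + e (of_int \<lfloor>real m * t\<rfloor>)"
      unfolding e_add[symmetric] frac_def by simp
    then have "real m * e t = e (frac (real m * t))"
      using e_int e_nat_mult by simp
    moreover have "\<bar>e (frac (real m * t))\<bar> \<le> K' * frac (real m * t)"
      using e_bound[of "frac (real m * t)"] by simp
    moreover have "K' * frac (real m * t) \<le> K'"
      using K'_nonneg frac_lt_1 by (intro mult_left_le) (auto intro: less_imp_le)
    ultimately show ?thesis by (simp add: abs_mult)
  qed
  have "e x = 0"
  proof (rule ccontr)
    assume "e x \<noteq> 0"
    then obtain m where "K' < real m * \<bar>e x\<bar>"
      using reals_Archimedean3[of "\<bar>e x\<bar>"] by auto
    then show False using multiples_bounded[of m x] by simp
  qed
  then show ?thesis unfolding e_def by simp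
qed

lemma not_affine_imp_nonconstant_increment:
  fixes \<rho> :: "real \<Rightarrow> real"
  assumes "C-lipschitz_on UNIV \<rho>" and "\<not> (\<exists>a c. \<forall>t. \<rho> t = a * t + c)"
  obtains c s0 s1 where "\<rho> (s0 + c) - \<rho> s0 \<noteq> \<rho> (s1 + c) - \<rho> s1"
proof (rule ccontr)
  assume "\<not> thesis"
  with that have increment: "\<rho> (s + c) - \<rho> s = \<rho> c - \<rho> 0" for s c
    by (metis add_0)
  define g where "g t = \<rho> t - \<rho> 0" for t
  have "g (x + y) = g x + g y" for x y
    unfolding g_def using increment[of x y] by (simp add: algebra_simps)
  moreover have "\<bar>g x\<bar> \<le> C * \<bar>x\<bar>" for x
    unfolding g_def using lipschitz_onD[OF assms(1), of x 0] by (simp add: dist_real_def)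
  ultimately have "\<rho> t = g 1 * t + \<rho> 0" for t
    using additive_imp_linear_if_bounded[of g C t] unfolding g_def by simp
  then show False using assms(2) by blast
qed

lemma affine_through_two_points:
  fixes u0 u1 p q :: real
  assumes "u0 \<noteq> u1"
  obtains a b where "a * u0 + b = p" "a * u1 + b = q"
proof
  let ?a = "(q - p) / (u1 - u0)"
  show "?a * u0 + (p - ?a * u0) = p" by simp
  have "?a * u1 + (p - ?a * u0) = ?a * (u1 - u0) + p" unfolding right_diff_distrib by linarith
  then show "?a * u1 + (p - ?a * u0) = q" using assms by simp
qed

lemma abs_affine_le:
  fixes a b x :: real
  assumes "\<bar>x\<bar> \<le> K"
  shows "\<bar>a * x + b\<bar> \<le> \<bar>a\<bar> * K + \<bar>b\<bar>"
  using abs_triangle_ineq[of "a * x" b] mult_left_mono[OF assms abs_ge_zero[of a]]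
  unfolding abs_mult by linarith

section \<open>Networks computing a function of one input coordinate\<close>

definition ridge_layer :: "real \<Rightarrow> real \<Rightarrow> real \<Rightarrow> mat \<times> vect" where
  "ridge_layer w b c =
     ((\<lambda>i j. if i < 2 \<and> j = 0 then w else 0), (\<lambda>i. if i = 0 then b + c else if i = 1 then b else 0))"

definition difference_layer :: "real \<Rightarrow> real \<Rightarrow> mat \<times> vect" where
  "difference_layer a b =
     ((\<lambda>i j. if i = 0 \<and> j = 0 then a else if i = 0 \<and> j = 1 then - a else 0), (\<lambda>i. if i = 0 then b else 0))"

definition scalar_layer :: "real \<Rightarrow> real \<Rightarrow> mat \<times> vect" where
  "scalar_layer a b = ((\<lambda>i j. if i = 0 \<and> j = 0 then a else 0), (\<lambda>i. if i = 0 then b else 0))"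

definition ridge_net :: "nat \<Rightarrow> real \<Rightarrow> real \<Rightarrow> real \<Rightarrow> (nat \<Rightarrow> real) \<Rightarrow> (nat \<Rightarrow> real) \<Rightarrow> network" where
  "ridge_net L w b c a \<beta> =
     ridge_layer w b c # difference_layer (a 0) (\<beta> 0) # map (\<lambda>m. scalar_layer (a m) (\<beta> m)) [1..<L - 1]"

primrec ridge_chain :: "(real \<Rightarrow> real) \<Rightarrow> real \<Rightarrow> (nat \<Rightarrow> real) \<Rightarrow> (nat \<Rightarrow> real) \<Rightarrow> nat \<Rightarrow> real \<Rightarrow> real" where
  "ridge_chain \<rho> c a \<beta> 0 t = \<rho> (t + c) - \<rho> t"
| "ridge_chain \<rho> c a \<beta> (Suc m) t = \<rho> (a m * ridge_chain \<rho> c a \<beta> m t + \<beta> m)"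

lemma aff_ridge_layer:
  "1 \<le> n \<Longrightarrow> aff (ridge_layer w b c) n u i = (if i = 0 then w * u 0 + b + c else if i = 1 then w * u 0 + b else 0)"
  unfolding aff_def ridge_layer_def by (auto simp: if_distrib[of "\<lambda>x. x * _"] sum.delta cong: if_cong)

lemma aff_difference_layer: "2 \<le> n \<Longrightarrow> aff (difference_layer a b) n u 0 = a * (u 0 - u 1) + b"
  unfolding aff_def difference_layer_def by (simp add: if_distrib[of "\<lambda>x. x * _"] sum.If_cases right_diff_distrib)

lemma aff_scalar_layer: "1 \<le> n \<Longrightarrow> aff (scalar_layer a b) n u 0 = a * u 0 + b"
  unfolding aff_def scalar_layer_def by (simp add: if_distrib[of "\<lambda>x. x * _"] sum.delta cong: if_cong)

lemma is_arch_widths_pos: "is_arch S \<Longrightarrow> l < length S \<Longrightarrow> S ! l \<ge> 1"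
  unfolding is_arch_def by blast

lemma length_ridge_net: "2 \<le> L \<Longrightarrow> length (ridge_net L w b c a \<beta>) = L"
  unfolding ridge_net_def by simp

lemma nth_ridge_net:
  "ridge_net L w b c a \<beta> ! 0 = ridge_layer w b c"
  "ridge_net L w b c a \<beta> ! Suc 0 = difference_layer (a 0) (\<beta> 0)"
  "Suc (Suc m) < L \<Longrightarrow> ridge_net L w b c a \<beta> ! Suc (Suc m) = scalar_layer (a (Suc m)) (\<beta> (Suc m))"
  unfolding ridge_net_def using nth_upt[of 1 m "L - 1"] by simp_all

lemma ridge_net_in_NN:
  assumes "is_arch S" "length S \<ge> 3" "S ! 1 \<ge> 2"
  shows "ridge_net (length S - 1) w b c a \<beta> \<in> NN S"
  unfolding NN_def
proof (intro CollectI conjI allI impI)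
  let ?\<Phi> = "ridge_net (length S - 1) w b c a \<beta>"
  have len: "length ?\<Phi> = length S - 1" using assms(2) by (simp add: length_ridge_net)
  then show "length ?\<Phi> = length S - 1" .
  fix l assume "l < length ?\<Phi>"
  then have l: "S ! l \<ge> 1" "S ! Suc l \<ge> 1" "Suc l < length S"
    using len is_arch_widths_pos[OF assms(1)] by auto
  consider "l = 0" | "l = 1" | m where "l = Suc (Suc m)" by (metis One_nat_def not0_implies_Suc)
  then have "(\<forall>i j. (S ! Suc l \<le> i \<or> S ! l \<le> j) \<longrightarrow> fst (?\<Phi> ! l) i j = 0)
           \<and> (\<forall>i. S ! Suc l \<le> i \<longrightarrow> snd (?\<Phi> ! l) i = 0)"
    by cases (use l assms(3) in \<open>auto simp: nth_ridge_net ridge_layer_def difference_layer_def scalar_layer_def\<close>)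
  then show "S ! Suc l \<le> i \<or> S ! l \<le> j \<Longrightarrow> fst (?\<Phi> ! l) i j = 0"
    and "S ! Suc l \<le> i \<Longrightarrow> snd (?\<Phi> ! l) i = 0" for i j
    by blast+
qed

lemma aff_ridge_net:
  fixes \<rho> :: "real \<Rightarrow> real" and S :: "nat list" and w b c :: real and a \<beta> :: "nat \<Rightarrow> real"
  defines "\<Phi> \<equiv> ridge_net (length S - 1) w b c a \<beta>"
  assumes "is_arch S" "S ! 1 \<ge> 2" "Suc m < length S - 1"
  shows "aff (\<Phi> ! Suc m) (S ! Suc m) (act \<rho> S \<Phi> u (Suc m)) 0
       = a m * ridge_chain \<rho> c a \<beta> m (w * u 0 + b) + \<beta> m"
  using assms(4)
proof (induction m)
  case 0
  have "S ! 0 \<ge> 1" using 0 by (intro is_arch_widths_pos[OF assms(2)]) linarith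
  then show ?case
    using assms(3) by (simp add: \<Phi>_def nth_ridge_net aff_ridge_layer aff_difference_layer)
next
  case (Suc m)
  have "S ! Suc (Suc m) \<ge> 1" using Suc.prems by (intro is_arch_widths_pos[OF assms(2)]) simp
  moreover have "act \<rho> S \<Phi> u (Suc (Suc m)) 0 = ridge_chain \<rho> c a \<beta> (Suc m) (w * u 0 + b)"
    using Suc by simp
  ultimately show ?case
    using Suc.prems by (simp del: act.simps add: \<Phi>_def nth_ridge_net aff_scalar_layer)
qed

lemma realize_ridge_net:
  assumes "is_arch S" "length S \<ge> 3" "S ! 1 \<ge> 2"
  shows "realize \<rho> S (ridge_net (length S - 1) w b c a \<beta>) x
       = a (length S - 3) * ridge_chain \<rho> c a \<beta> (length S - 3) (w * vec_to_seq x 0 + b) + \<beta> (length S - 3)"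
proof -
  have "length S - 1 - 1 = Suc (length S - 3)" using assms(2) by simp
  then show ?thesis
    unfolding realize_def Let_def using assms aff_ridge_net[OF assms(1,3)]
    by (simp add: length_ridge_net)
qed

lemma ridge_chain_cong:
  "(\<And>i. i < m \<Longrightarrow> a' i = a i) \<Longrightarrow> (\<And>i. i < m \<Longrightarrow> \<beta>' i = \<beta> i)
    \<Longrightarrow> ridge_chain \<rho> c a' \<beta>' m t = ridge_chain \<rho> c a \<beta> m t"
  by (induction m) auto

lemma ridge_chain_bounded:
  assumes "C-lipschitz_on UNIV \<rho>"
  obtains K where "\<And>t. \<bar>ridge_chain \<rho> c a \<beta> m t\<bar> \<le> K"
proof (induction m arbitrary: thesis)
  case 0
  have "\<bar>ridge_chain \<rho> c a \<beta> 0 t\<bar> \<le> C * \<bar>c\<bar>" for t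
    using lipschitz_onD[OF assms, of "t + c" t] by (simp add: dist_real_def)
  then show ?case by (rule 0)
next
  case (Suc m)
  then obtain K where K: "\<And>t. \<bar>ridge_chain \<rho> c a \<beta> m t\<bar> \<le> K" by blast
  have "\<bar>ridge_chain \<rho> c a \<beta> (Suc m) t\<bar> \<le> \<bar>\<rho> 0\<bar> + C * (\<bar>a m\<bar> * K + \<bar>\<beta> m\<bar>)" for t
  proof -
    let ?y = "a m * ridge_chain \<rho> c a \<beta> m t + \<beta> m"
    have "\<bar>?y\<bar> \<le> \<bar>a m\<bar> * K + \<bar>\<beta> m\<bar>"
      by (rule abs_affine_le[OF K])
    moreover have "\<bar>\<rho> ?y - \<rho> 0\<bar> \<le> C * \<bar>?y\<bar>"
      using lipschitz_onD[OF assms, of ?y 0] by (simp add: dist_real_def)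
    ultimately have "\<bar>\<rho> ?y\<bar> \<le> \<bar>\<rho> 0\<bar> + C * (\<bar>a m\<bar> * K + \<bar>\<beta> m\<bar>)"
      using lipschitz_on_nonneg[OF assms] abs_triangle_ineq2[of "\<rho> ?y" "\<rho> 0"]
        mult_left_mono[of "\<bar>?y\<bar>" "\<bar>a m\<bar> * K + \<bar>\<beta> m\<bar>" C]
      by linarith
    then show ?thesis by simp
  qed
  then show ?case by (rule Suc.prems)
qed

lemma ridge_chain_interpolating_coefficients:
  assumes "\<rho> (s0 + c) - \<rho> s0 \<noteq> \<rho> (s1 + c) - \<rho> s1" "\<rho> p \<noteq> \<rho> q"
  obtains a \<beta> where "\<And>m. a m * ridge_chain \<rho> c a \<beta> m s0 + \<beta> m = p"
    and "\<And>m. a m * ridge_chain \<rho> c a \<beta> m s1 + \<beta> m = q"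
proof -
  obtain a0 b0 where first: "a0 * (\<rho> (s0 + c) - \<rho> s0) + b0 = p" "a0 * (\<rho> (s1 + c) - \<rho> s1) + b0 = q"
    using affine_through_two_points[OF assms(1)] by blast
  obtain a1 b1 where later: "a1 * \<rho> p + b1 = p" "a1 * \<rho> q + b1 = q"
    using affine_through_two_points[OF assms(2)] by blast
  define a :: "nat \<Rightarrow> real" where "a m = (if m = 0 then a0 else a1)" for m
  define \<beta> :: "nat \<Rightarrow> real" where "\<beta> m = (if m = 0 then b0 else b1)" for m
  have "a m * ridge_chain \<rho> c a \<beta> m s0 + \<beta> m = p \<and> a m * ridge_chain \<rho> c a \<beta> m s1 + \<beta> m = q" for m
    by (induction m) (simp_all add: a_def \<beta>_def first later)
  then show ?thesis using that by blast
qed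

section \<open>Steep vanishing ridges\<close>

lemma uniform_limit_bounded_over_Suc:
  fixes P :: "real \<Rightarrow> real"
  assumes "\<And>t. \<bar>P t\<bar> \<le> K"
  shows "uniform_limit U (\<lambda>n x. P (g n x) / real (Suc n)) (\<lambda>x. 0) sequentially"
proof (rule uniform_limitI)
  fix e :: real assume "0 < e"
  have "(\<lambda>n. K / real (Suc n)) \<longlonglongrightarrow> 0" by real_asymp
  then have "\<forall>\<^sub>F n in sequentially. K / real (Suc n) < e"
    using \<open>0 < e\<close> by (simp add: order_tendstoD(2))
  then show "\<forall>\<^sub>F n in sequentially. \<forall>x\<in>U. dist (P (g n x) / real (Suc n)) 0 < e"
  proof (rule eventually_mono)
    fix n assume "K / real (Suc n) < e"
    moreover have "\<bar>P (g n x)\<bar> / real (Suc n) \<le> K / real (Suc n)" for x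
      using assms by (simp add: divide_right_mono)
    ultimately show "\<forall>x\<in>U. dist (P (g n x) / real (Suc n)) 0 < e"
      by (auto simp: dist_real_def intro: le_less_trans)
  qed
qed

lemma lip_const_steep_ridge_PInfty:
  fixes P :: "real \<Rightarrow> real" and U :: "(real^'d::finite) set" and k :: 'd
  assumes "P s0 \<noteq> P s1" "x0 \<in> interior U"
  shows "(\<lambda>n. lip_const U (\<lambda>x. P ((real (Suc n))\<^sup>2 * (x $ k - x0 $ k) + s0) / real (Suc n))) \<longlonglongrightarrow> \<infinity>"
proof -
  define f where "f n x = P ((real (Suc n))\<^sup>2 * (x $ k - x0 $ k) + s0) / real (Suc n)" for n x
  define \<Delta> where "\<Delta> = s1 - s0"
  define y where "y n = x0 + (\<Delta> / (real (Suc n))\<^sup>2) *\<^sub>R axis k 1" for n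
  define slope where "slope n = \<bar>P s1 - P s0\<bar> / \<bar>\<Delta>\<bar> * real (Suc n)" for n
  have \<Delta>: "\<Delta> \<noteq> 0" using assms(1) unfolding \<Delta>_def by auto
  have "(\<lambda>n. \<Delta> / (real (Suc n))\<^sup>2) \<longlonglongrightarrow> 0" by real_asymp
  then have "y \<longlonglongrightarrow> x0 + 0 *\<^sub>R axis k 1"
    unfolding y_def by (intro tendsto_intros)
  then have "\<forall>\<^sub>F n in sequentially. y n \<in> interior U"
    using assms(2) by (intro topological_tendstoD) auto
  then have y_in_U: "\<forall>\<^sub>F n in sequentially. y n \<in> U"
    by (rule eventually_mono) (use interior_subset in blast)
  have slope_eq: "dist (f n (y n)) (f n x0) / dist (y n) x0 = slope n" for n
  proof -
    have "dist (f n (y n)) (f n x0) = \<bar>P s1 - P s0\<bar> / real (Suc n)"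
      unfolding f_def y_def \<Delta>_def by (simp add: dist_real_def diff_divide_distrib[symmetric])
    moreover have "dist (y n) x0 = \<bar>\<Delta>\<bar> / (real (Suc n))\<^sup>2"
      unfolding y_def dist_norm by (simp add: norm_axis_1)
    moreover have "A / m / (B / m\<^sup>2) = A / B * m" if "m \<noteq> 0" for A B m :: real
      using that by (simp add: field_simps power2_eq_square)
    ultimately show ?thesis unfolding slope_def by simp
  qed
  have "filterlim slope at_top sequentially"
    unfolding slope_def using assms(1) \<Delta>
    by (intro filterlim_tendsto_pos_mult_at_top[OF tendsto_const]
        filterlim_compose[OF filterlim_real_sequentially filterlim_Suc]) auto
  then have slope_large: "\<forall>\<^sub>F n in sequentially. r < slope n" for r
    by (simp add: filterlim_at_top_dense)
  have slope_le: "ereal (slope n) \<le> lip_const U (f n)" if "y n \<in> U" for n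
    using slope_le_lip_const[OF that _, of x0 "f n"] slope_eq[of n] assms(2) \<Delta> interior_subset
    unfolding y_def by (auto simp: axis_eq_0_iff)
  have "\<forall>\<^sub>F n in sequentially. ereal r < lip_const U (f n)" for r
    using y_in_U slope_large[of r] by eventually_elim (auto intro: less_le_trans[OF _ slope_le])
  then show ?thesis unfolding f_def tendsto_PInfty by blast
qed

lemma vanishing_networks_with_lip_const_PInfty:
  fixes \<rho> :: "real \<Rightarrow> real" and \<Omega> :: "(real^'d::finite) set"
  assumes lip: "C-lipschitz_on UNIV \<rho>" and not_affine: "\<not> (\<exists>a c. \<forall>t. \<rho> t = a * t + c)"
    and S: "is_arch S" "length S \<ge> 3" "S ! 1 \<ge> 2" and "interior \<Omega> \<noteq> {}"
  shows "\<exists>\<Phi> :: nat \<Rightarrow> network. (\<forall>n. \<Phi> n \<in> NN S)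
            \<and> uniform_limit \<Omega> (\<lambda>n. realize \<rho> S (\<Phi> n)) (\<lambda>x. 0) sequentially
            \<and> (\<lambda>n. lip_const \<Omega> (realize \<rho> S (\<Phi> n))) \<longlonglongrightarrow> \<infinity>"
proof -
  obtain c s0 s1 where increment: "\<rho> (s0 + c) - \<rho> s0 \<noteq> \<rho> (s1 + c) - \<rho> s1"
    using not_affine_imp_nonconstant_increment[OF lip not_affine] .
  obtain p q where pq: "\<rho> p \<noteq> \<rho> q"
    using not_affine by (metis add_0 mult_zero_left)
  obtain a \<beta> where s0_to_p: "\<And>m. a m * ridge_chain \<rho> c a \<beta> m s0 + \<beta> m = p"
    and s1_to_q: "\<And>m. a m * ridge_chain \<rho> c a \<beta> m s1 + \<beta> m = q"
    using ridge_chain_interpolating_coefficients[OF increment pq] by blast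
  define M where "M = length S - 3"
  define P where "P t = a M * ridge_chain \<rho> c a \<beta> M t + \<beta> M" for t
  have "P s0 \<noteq> P s1" using s0_to_p s1_to_q pq unfolding P_def by metis
  obtain K0 where "\<And>t. \<bar>ridge_chain \<rho> c a \<beta> M t\<bar> \<le> K0" using ridge_chain_bounded[OF lip] by blast
  then have "\<bar>P t\<bar> \<le> \<bar>a M\<bar> * K0 + \<bar>\<beta> M\<bar>" for t
    unfolding P_def by (rule abs_affine_le)
  obtain x0 where "x0 \<in> interior \<Omega>" using assms(6) by blast
  define k :: 'd where "k = coord_enum 0"
  define w where "w n = (real (Suc n))\<^sup>2" for n
  define \<Phi> where "\<Phi> n = ridge_net (length S - 1) (w n) (s0 - w n * x0 $ k) c
      (a(M := a M / real (Suc n))) (\<beta>(M := \<beta> M / real (Suc n)))" for n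
  have realize_\<Phi>: "realize \<rho> S (\<Phi> n) = (\<lambda>x. P (w n * (x $ k - x0 $ k) + s0) / real (Suc n))" for n
  proof
    fix x :: "real^'d"
    have "vec_to_seq x 0 = x $ k" unfolding vec_to_seq_def k_def by simp
    then have arg: "w n * vec_to_seq x 0 + (s0 - w n * x0 $ k) = w n * (x $ k - x0 $ k) + s0"
      by (simp add: algebra_simps)
    have chain: "ridge_chain \<rho> c (a(M := a M / real (Suc n))) (\<beta>(M := \<beta> M / real (Suc n))) M
        = ridge_chain \<rho> c a \<beta> M"
      by (rule ext, rule ridge_chain_cong) auto
    show "realize \<rho> S (\<Phi> n) x = P (w n * (x $ k - x0 $ k) + s0) / real (Suc n)"
      unfolding \<Phi>_def realize_ridge_net[OF S] M_def[symmetric] chain arg P_def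
      by (simp add: add_divide_distrib)
  qed
  show ?thesis
  proof (intro exI conjI allI)
    show "\<Phi> n \<in> NN S" for n unfolding \<Phi>_def using S by (rule ridge_net_in_NN)
    show "uniform_limit \<Omega> (\<lambda>n. realize \<rho> S (\<Phi> n)) (\<lambda>x. 0) sequentially"
      unfolding realize_\<Phi> by (rule uniform_limit_bounded_over_Suc) fact
    show "(\<lambda>n. lip_const \<Omega> (realize \<rho> S (\<Phi> n))) \<longlonglongrightarrow> \<infinity>"
      unfolding realize_\<Phi> w_def by (rule lip_const_steep_ridge_PInfty) fact+
  qed
qed

theorem theorem4p2:
  fixes \<rho> :: "real \<Rightarrow> real" and S :: "nat list" and \<Omega> :: "(real^'d::finite) set"
  assumes "\<exists>C. C-lipschitz_on UNIV \<rho>"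
    and "\<not> (\<exists>a c. \<forall>t. \<rho> t = a * t + c)"
    and "is_arch S" and "length S \<ge> 3"
    and "S ! 0 = CARD('d)" and "S ! 1 \<ge> 3" and "last S = 1"
    and "bounded \<Omega>" and "interior \<Omega> \<noteq> {}"
  shows "(\<exists>\<Phi> :: nat \<Rightarrow> network. (\<forall>n. \<Phi> n \<in> NN S)
            \<and> uniform_limit \<Omega> (\<lambda>n. realize \<rho> S (\<Phi> n)) (\<lambda>x. 0) sequentially
            \<and> (\<lambda>n. lip_const \<Omega> (realize \<rho> S (\<Phi> n))) \<longlonglongrightarrow> \<infinity>)
       \<and> (\<forall>\<Phi> \<Psi> :: nat \<Rightarrow> network.
            (\<forall>n. \<Phi> n \<in> NN S)
            \<and> uniform_limit \<Omega> (\<lambda>n. realize \<rho> S (\<Phi> n)) (\<lambda>x. 0) sequentially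
            \<and> (\<lambda>n. lip_const \<Omega> (realize \<rho> S (\<Phi> n))) \<longlonglongrightarrow> \<infinity>
            \<and> (\<forall>n. \<Psi> n \<in> NN S)
            \<and> (\<forall>n. \<forall>x\<in>\<Omega>. realize \<rho> S (\<Psi> n) x = realize \<rho> S (\<Phi> n) x)
            \<longrightarrow> filterlim (\<lambda>n. scaling S (\<Psi> n)) at_top sequentially)"
proof (intro conjI allI impI)
  obtain C where lip: "C-lipschitz_on UNIV \<rho>" using assms(1) by blast
  show "\<exists>\<Phi> :: nat \<Rightarrow> network. (\<forall>n. \<Phi> n \<in> NN S)
            \<and> uniform_limit \<Omega> (\<lambda>n. realize \<rho> S (\<Phi> n)) (\<lambda>x. 0) sequentially
            \<and> (\<lambda>n. lip_const \<Omega> (realize \<rho> S (\<Phi> n))) \<longlonglongrightarrow> \<infinity>"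
    using assms(3,4,6,9) by (intro vanishing_networks_with_lip_const_PInfty[OF lip assms(2)]) auto
  fix \<Phi> \<Psi> :: "nat \<Rightarrow> network"
  assume hyps: "(\<forall>n. \<Phi> n \<in> NN S)
            \<and> uniform_limit \<Omega> (\<lambda>n. realize \<rho> S (\<Phi> n)) (\<lambda>x. 0) sequentially
            \<and> (\<lambda>n. lip_const \<Omega> (realize \<rho> S (\<Phi> n))) \<longlonglongrightarrow> \<infinity>
            \<and> (\<forall>n. \<Psi> n \<in> NN S)
            \<and> (\<forall>n. \<forall>x\<in>\<Omega>. realize \<rho> S (\<Psi> n) x = realize \<rho> S (\<Phi> n) x)"
  then have "lip_const \<Omega> (realize \<rho> S (\<Psi> n)) = lip_const \<Omega> (realize \<rho> S (\<Phi> n))" for n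
    by (intro lip_const_cong) blast
  then show "filterlim (\<lambda>n. scaling S (\<Psi> n)) at_top sequentially"
    using hyps assms(4) by (intro scaling_at_top_if_lip_const_PInfty[OF lip, where U = \<Omega>]) auto
qed

end
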